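(* Let $p\in[1,\infty]$, $a,b\in\mathbb{R}$ with $b\neq 0$ and $|a|\neq |b|^{1/p}$ (with the convention $|b|^{1/p}=1$ when $p=\infty$). Define linear operators $T_b, M_{a,b}: L^p(\mathbb{R})\to L^p(\mathbb{R})$ by $(T_b f)(x)=f(bx)$ and $M_{a,b}f=(I-aT_b)f$, i.e. $(M_{a,b}f)(x)=f(x)-af(bx)$. Then $T_b$ and $M_{a,b}$ are homeomorphisms from $L^p(\mathbb{R})$ onto itself. Moreover: (1) $T_b^{-1}=T_{1/b}$; (2) $\|T_b\|_p=|b|^{-1/p}$; (3) for all $f\in L^p(\mathbb{R})$, $$\left|1-\frac{|a|}{|b|^{1/p}}\right|\,\|f\|_p\le \|M_{a,b}f\|_p\le \left(1+\frac{|a|}{|b|^{1/p}}\right)\|f\|_p;$$ (4) $$M_{a,b}^{-1}=\begin{cases}\sum_{n=0}^\infty a^nT_b^n & \text{if } |a|<|b|^{1/p},\\ -\sum_{n=1}^\infty \left(\frac1a\right)^n T_{1/b}^n & \text{if } |a|>|b|^{1/p}.\end{cases}$$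
   Context: $L^p(\mathbb{R})$ is the usual Lebesgue space of real-valued functions with norm $\|\cdot\|_p$ (essential supremum norm for $p=\infty$). For a bounded linear operator $H$ on $L^p(\mathbb{R})$, $\|H\|_p=\max\{\|Hf\|_p:\|f\|_p=1\}$. By convention $|b|^{1/p}=1$ when $p=\infty$. *)

theory Defs
  imports "HOL-Probability.Probability"
begin

text \<open>Exponent p ranges over [1, infinity], modelled as an ennreal with 1 <= p;
  p = top means p = infinity.  Elements of L^p(R) are represented by
  Lebesgue-measurable real functions; equality in L^p is equality almost everywhere.\<close>

definition memLp :: "ennreal \<Rightarrow> (real \<Rightarrow> real) \<Rightarrow> bool" where
  "memLp p f \<longleftrightarrow> f \<in> borel_measurable lebesgue \<and>
     (if p = \<infinity> then esssup lebesgue (\<lambda>x. ereal \<bar>f x\<bar>) < \<infinity>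
      else (\<integral>\<^sup>+ x. ennreal (\<bar>f x\<bar> powr enn2real p) \<partial>lebesgue) < \<infinity>)"

definition Lp_norm :: "ennreal \<Rightarrow> (real \<Rightarrow> real) \<Rightarrow> real" where
  "Lp_norm p f =
     (if p = \<infinity> then real_of_ereal (esssup lebesgue (\<lambda>x. ereal \<bar>f x\<bar>))
      else (enn2real (\<integral>\<^sup>+ x. ennreal (\<bar>f x\<bar> powr enn2real p) \<partial>lebesgue))
             powr (1 / enn2real p))"

definition op_norm :: "ennreal \<Rightarrow> ((real \<Rightarrow> real) \<Rightarrow> (real \<Rightarrow> real)) \<Rightarrow> real" where
  "op_norm p H = Sup {Lp_norm p (H f) | f. memLp p f \<and> Lp_norm p f = 1}"

text \<open>H induces a homeomorphism of L^p(R) (the space of a.e.-classes) onto itself.\<close>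
definition Lp_homeomorphism :: "ennreal \<Rightarrow> ((real \<Rightarrow> real) \<Rightarrow> (real \<Rightarrow> real)) \<Rightarrow> bool" where
  "Lp_homeomorphism p H \<longleftrightarrow>
     (\<forall>f. memLp p f \<longrightarrow> memLp p (H f)) \<and>
     (\<forall>f g. memLp p f \<longrightarrow> memLp p g \<longrightarrow> (AE x in lebesgue. f x = g x)
            \<longrightarrow> (AE x in lebesgue. H f x = H g x)) \<and>
     (\<forall>f g. memLp p f \<longrightarrow> memLp p g \<longrightarrow> (AE x in lebesgue. H f x = H g x)
            \<longrightarrow> (AE x in lebesgue. f x = g x)) \<and>
     (\<forall>g. memLp p g \<longrightarrow> (\<exists>f. memLp p f \<and> (AE x in lebesgue. H f x = g x))) \<and>
     (\<forall>fs f. (\<forall>n. memLp p (fs n)) \<longrightarrow> memLp p f \<longrightarrow>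
            (\<lambda>n. Lp_norm p (\<lambda>x. fs n x - f x)) \<longlonglongrightarrow> 0 \<longrightarrow>
            (\<lambda>n. Lp_norm p (\<lambda>x. H (fs n) x - H f x)) \<longlonglongrightarrow> 0) \<and>
     (\<forall>fs f. (\<forall>n. memLp p (fs n)) \<longrightarrow> memLp p f \<longrightarrow>
            (\<lambda>n. Lp_norm p (\<lambda>x. H (fs n) x - H f x)) \<longlonglongrightarrow> 0 \<longrightarrow>
            (\<lambda>n. Lp_norm p (\<lambda>x. fs n x - f x)) \<longlonglongrightarrow> 0)"

definition bpow :: "ennreal \<Rightarrow> real \<Rightarrow> real" where
  "bpow p b = (if p = \<infinity> then 1 else \<bar>b\<bar> powr (1 / enn2real p))"

definition Top :: "real \<Rightarrow> (real \<Rightarrow> real) \<Rightarrow> (real \<Rightarrow> real)" where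
  "Top b f = (\<lambda>x. f (b * x))"

definition Mop :: "real \<Rightarrow> real \<Rightarrow> (real \<Rightarrow> real) \<Rightarrow> (real \<Rightarrow> real)" where
  "Mop a b f = (\<lambda>x. f x - a * Top b f x)"

end

theory Submission
  imports Defs
begin

(* The dilation T_b f = f(b .) scales every L^p norm by |b|^(-1/p) (change of variables
   x -> b x; for p = infinity it preserves the essential supremum). By the triangle inequality
   M = I - a T_b is then bounded above by 1 + |a|/|b|^(1/p) and below by |1 - |a|/|b|^(1/p)|.
   If |a| < |b|^(1/p) the Neumann series sum a^n T_b^n, and if |a| > |b|^(1/p) the series
   - sum_{n>=1} a^(-n) T_(1/b)^n, has terms decaying geometrically in norm; by completeness
   of L^p its sum exists, and telescoping shows that it is a right inverse of M. The lower
   bound makes M injective on a.e.-classes, so M is a homeomorphism.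
   Completeness is proved directly: for p < infinity, monotone convergence applied to
   (sum |h_n|)^p together with Minkowski's inequality gives a.e. absolute convergence. *)

section \<open>Dilations of Lebesgue measure\<close>

lemma lebesgue_measurable_mult_left: "(\<lambda>y::real. c * y) \<in> lebesgue \<rightarrow>\<^sub>M lebesgue"
  using lebesgue_measurable_scaling[of c, where 'a=real] by (simp add: real_scaleR_def[abs_def])

lemma borel_measurable_lebesgue_dilation:
  fixes f :: "real \<Rightarrow> 'a::topological_space"
  assumes "f \<in> borel_measurable lebesgue"
  shows "(\<lambda>x. f (c * x)) \<in> borel_measurable lebesgue"
  using measurable_compose[OF lebesgue_measurable_mult_left assms] by (simp add: o_def)

lemma AE_lebesgue_dilation:
  fixes c :: real
  assumes c: "c \<noteq> 0" and ae: "AE x in lebesgue. P x"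
  shows "AE x in lebesgue. P (c * x)"
proof -
  from ae obtain N where N: "{x \<in> space lebesgue. \<not> P x} \<subseteq> N" "emeasure lebesgue N = 0"
    "N \<in> sets lebesgue"
    by (rule AE_E)
  define N' where "N' = (\<lambda>y::real. c * y) -` N"
  have "N' \<in> sets lebesgue"
    using measurable_sets[OF lebesgue_measurable_mult_left N(3)] by (simp add: N'_def)
  moreover have "N' = (\<lambda>x. (1/c) *\<^sub>R x + 0) ` N"
  proof (intro set_eqI iffI)
    fix y assume "y \<in> N'"
    then have "c * y \<in> N" "y = (1/c) *\<^sub>R (c * y) + 0" using c by (simp_all add: N'_def)
    then show "y \<in> (\<lambda>x. (1/c) *\<^sub>R x + 0) ` N" by blast
  qed (use c in \<open>auto simp: N'_def\<close>)
  then have "emeasure lebesgue N' = 0"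
    using emeasure_lebesgue_affine[of "1/c" 0 N] N(2) by simp
  moreover have "{x \<in> space lebesgue. \<not> P (c * x)} \<subseteq> N'"
    using N(1) by (auto simp: N'_def)
  ultimately show ?thesis by (intro AE_I) auto
qed

lemma nn_integral_lebesgue_dilation:
  fixes c :: real
  assumes f: "f \<in> borel_measurable lebesgue" and c: "c \<noteq> 0"
  shows "(\<integral>\<^sup>+x. f (c * x) \<partial>lebesgue) = ennreal (1/\<bar>c\<bar>) * (\<integral>\<^sup>+x. f x \<partial>lebesgue)"
proof -
  have "(\<integral>\<^sup>+x. f x \<partial>lebesgue) = ennreal\<bar>c\<bar> * (\<integral>\<^sup>+x. f(0 + c * x) \<partial>lebesgue)"
    by (rule nn_integral_real_affine_lebesgue[OF f c])
  then have "ennreal (1/\<bar>c\<bar>) * (\<integral>\<^sup>+x. f x \<partial>lebesgue)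
      = (ennreal (1/\<bar>c\<bar>) * ennreal\<bar>c\<bar>) * (\<integral>\<^sup>+x. f (c * x) \<partial>lebesgue)"
    by (simp add: mult.assoc)
  also have "ennreal (1/\<bar>c\<bar>) * ennreal\<bar>c\<bar> = 1"
    using c by (simp add: ennreal_mult[symmetric])
  finally show ?thesis by simp
qed

section \<open>Minkowski inequality and completeness for finite exponents\<close>

lemma powr_mult_le_of_le_1:
  fixes t w q :: real
  assumes "0 \<le> t" "t \<le> 1" "0 \<le> w" "1 \<le> q"
  shows "(t * w) powr q \<le> t * w powr q"
proof -
  have "t powr q \<le> t"
  proof (cases "t = 0")
    case False
    then show ?thesis using assms by (intro powr_le_one_le) auto
  qed simp
  then have "t powr q * w powr q \<le> t * w powr q" by (rule mult_right_mono) simp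
  then show ?thesis using assms by (simp add: powr_mult)
qed

lemma powr_convex_combination_le:
  fixes u v l q :: real
  assumes "u \<ge> 0" "v \<ge> 0" "0 \<le> l" "l \<le> 1" "q \<ge> 1"
  shows "(l * u + (1 - l) * v) powr q \<le> l * u powr q + (1 - l) * v powr q"
proof -
  consider "u > 0" "v > 0" | "u = 0" | "v = 0"
    using assms by linarith
  then show ?thesis
  proof cases
    case 1
    from convex_onD[OF powr_convex[OF assms(5)], of "1 - l" u v] 1 assms
    show ?thesis by (simp add: add.commute)
  next
    case 2
    have "((1 - l) * v) powr q \<le> (1 - l) * v powr q"
      using assms by (intro powr_mult_le_of_le_1) auto
    with 2 assms show ?thesis by simp
  next
    case 3
    have "(l * u) powr q \<le> l * u powr q"
      using assms by (intro powr_mult_le_of_le_1) auto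
    with 3 assms show ?thesis by simp
  qed
qed

definition qintegral :: "real \<Rightarrow> (real \<Rightarrow> real) \<Rightarrow> ennreal" where
  "qintegral q f = (\<integral>\<^sup>+x. ennreal (\<bar>f x\<bar> powr q) \<partial>lebesgue)"

definition qnorm :: "real \<Rightarrow> (real \<Rightarrow> real) \<Rightarrow> real" where
  "qnorm q f = enn2real (qintegral q f) powr (1/q)"

lemma qnorm_nonneg: "qnorm q f \<ge> 0" by (simp add: qnorm_def)

lemma qintegral_eq_qnorm_powr:
  assumes "qintegral q f < \<infinity>" "q \<ge> 1"
  shows "qintegral q f = ennreal (qnorm q f powr q)"
proof -
  have "qintegral q f = ennreal (enn2real (qintegral q f))" using assms by (simp add: less_top)
  moreover have "(enn2real (qintegral q f) powr (1/q)) powr q = enn2real (qintegral q f)"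
    using assms(2) by (simp add: powr_powr)
  ultimately show ?thesis by (simp add: qnorm_def)
qed

lemma qnorm_le_if_qintegral_le:
  assumes "qintegral q f \<le> ennreal (A powr q)" "A \<ge> 0" "q \<ge> 1"
  shows "qnorm q f \<le> A"
proof -
  have "enn2real (qintegral q f) \<le> enn2real (ennreal (A powr q))"
    by (rule enn2real_mono[OF assms(1)]) simp
  then have "enn2real (qintegral q f) \<le> A powr q" by simp
  then have "enn2real (qintegral q f) powr (1/q) \<le> (A powr q) powr (1/q)"
    using assms by (intro powr_mono2) auto
  also have "\<dots> = A" using assms by (simp add: powr_powr)
  finally show ?thesis by (simp add: qnorm_def)
qed

lemma abs_add_powr_le_weighted:
  fixes A B q x y :: real
  assumes A: "A > 0" and B: "B > 0" and q: "q \<ge> 1"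
  shows "\<bar>x + y\<bar> powr q \<le> ((A+B) powr q * (A/(A+B)) / A powr q) * \<bar>x\<bar> powr q
            + ((A+B) powr q * (B/(A+B)) / B powr q) * \<bar>y\<bar> powr q"
proof -
  define l where "l = A/(A+B)"
  have l: "0 \<le> l" "l \<le> 1" "1 - l = B/(A+B)" using A B by (auto simp: l_def field_simps)
  have eq: "\<bar>x\<bar> + \<bar>y\<bar> = (A+B) * (l * (\<bar>x\<bar>/A) + (1 - l) * (\<bar>y\<bar>/B))"
  proof -
    have "l * (\<bar>x\<bar>/A) = \<bar>x\<bar>/(A+B)" using A B by (simp add: l_def field_simps)
    moreover have "(1 - l) * (\<bar>y\<bar>/B) = \<bar>y\<bar>/(A+B)" using A B unfolding l(3)
      by (simp add: field_simps)
    ultimately show ?thesis using A B by (simp add: add_divide_distrib[symmetric])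
  qed
  have "\<bar>x + y\<bar> powr q \<le> (\<bar>x\<bar> + \<bar>y\<bar>) powr q"
    using q by (intro powr_mono2) auto
  also have "\<dots> = (A+B) powr q * (l * (\<bar>x\<bar>/A) + (1 - l) * (\<bar>y\<bar>/B)) powr q"
    unfolding eq using A B l by (simp add: powr_mult)
  also have "\<dots> \<le> (A+B) powr q * (l * (\<bar>x\<bar>/A) powr q + (1 - l) * (\<bar>y\<bar>/B) powr q)"
    using A B l q by (intro mult_left_mono powr_convex_combination_le) auto
  also have "\<dots> = ((A+B) powr q * (A/(A+B)) / A powr q) * \<bar>x\<bar> powr q
            + ((A+B) powr q * (B/(A+B)) / B powr q) * \<bar>y\<bar> powr q"
    using A B by (simp add: l l_def powr_divide field_simps)
  finally show ?thesis .
qed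

lemma qintegral_add_le:
  fixes f g :: "real \<Rightarrow> real"
  assumes f: "f \<in> borel_measurable lebesgue" and g: "g \<in> borel_measurable lebesgue"
    and q: "q \<ge> 1" and A: "A > 0" and B: "B > 0"
    and fA: "qintegral q f \<le> ennreal (A powr q)" and gB: "qintegral q g \<le> ennreal (B powr q)"
  shows "qintegral q (\<lambda>x. f x + g x) \<le> ennreal ((A+B) powr q)"
proof -
  define c1 where "c1 = (A+B) powr q * (A/(A+B)) / A powr q"
  define c2 where "c2 = (A+B) powr q * (B/(A+B)) / B powr q"
  have c: "c1 \<ge> 0" "c2 \<ge> 0" using A B by (auto simp: c1_def c2_def)
  have "qintegral q (\<lambda>x. f x + g x)
      \<le> (\<integral>\<^sup>+x. ennreal (c1 * \<bar>f x\<bar> powr q) + ennreal (c2 * \<bar>g x\<bar> powr q) \<partial>lebesgue)"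
    unfolding qintegral_def
  proof (intro nn_integral_mono)
    fix x
    have "\<bar>f x + g x\<bar> powr q \<le> c1 * \<bar>f x\<bar> powr q + c2 * \<bar>g x\<bar> powr q"
      using abs_add_powr_le_weighted[OF A B q] unfolding c1_def c2_def by blast
    then have "ennreal (\<bar>f x + g x\<bar> powr q) \<le> ennreal (c1 * \<bar>f x\<bar> powr q + c2 * \<bar>g x\<bar> powr q)"
      by (rule ennreal_leI)
    also have "\<dots> = ennreal (c1 * \<bar>f x\<bar> powr q) + ennreal (c2 * \<bar>g x\<bar> powr q)"
      using c by (intro ennreal_plus) auto
    finally show "ennreal (\<bar>f x + g x\<bar> powr q)
        \<le> ennreal (c1 * \<bar>f x\<bar> powr q) + ennreal (c2 * \<bar>g x\<bar> powr q)" .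
  qed
  also have "\<dots> = (\<integral>\<^sup>+x. ennreal c1 * ennreal (\<bar>f x\<bar> powr q) \<partial>lebesgue)
      + (\<integral>\<^sup>+x. ennreal c2 * ennreal (\<bar>g x\<bar> powr q) \<partial>lebesgue)"
    using f g c by (subst nn_integral_add[symmetric]) (auto simp: ennreal_mult)
  also have "\<dots> = ennreal c1 * qintegral q f + ennreal c2 * qintegral q g"
    using f g by (simp add: nn_integral_cmult qintegral_def)
  also have "\<dots> \<le> ennreal c1 * ennreal (A powr q) + ennreal c2 * ennreal (B powr q)"
    by (intro add_mono mult_left_mono fA gB) auto
  also have "\<dots> = ennreal (c1 * A powr q + c2 * B powr q)"
    using c by (simp add: ennreal_mult ennreal_plus)
  also have "c1 * A powr q + c2 * B powr q = (A+B) powr q"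
  proof -
    have "c1 * A powr q = (A+B) powr q * (A/(A+B))" using A by (simp add: c1_def)
    moreover have "c2 * B powr q = (A+B) powr q * (B/(A+B))" using B by (simp add: c2_def)
    moreover have "A/(A+B) + B/(A+B) = 1" using A B by (simp add: add_divide_distrib[symmetric])
    ultimately show ?thesis by (metis distrib_left mult.right_neutral)
  qed
  finally show ?thesis .
qed

lemma qnorm_triangle:
  fixes f g :: "real \<Rightarrow> real"
  assumes f: "f \<in> borel_measurable lebesgue" and g: "g \<in> borel_measurable lebesgue"
    and q: "q \<ge> 1" and fi: "qintegral q f < \<infinity>" and gi: "qintegral q g < \<infinity>"
  shows "qintegral q (\<lambda>x. f x + g x) < \<infinity>"
    and "qnorm q (\<lambda>x. f x + g x) \<le> qnorm q f + qnorm q g"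
proof -
  \<comment> \<open>qintegral_add_le needs positive bounds, since the norms of f and g may vanish\<close>
  have main: "qintegral q (\<lambda>x. f x + g x) \<le> ennreal ((qnorm q f + qnorm q g + 2*e) powr q)"
    if e: "e > 0" for e
  proof -
    have "qintegral q (\<lambda>x. f x + g x) \<le> ennreal (((qnorm q f + e) + (qnorm q g + e)) powr q)"
    proof (rule qintegral_add_le[OF f g q])
      show "qintegral q f \<le> ennreal ((qnorm q f + e) powr q)"
        using qintegral_eq_qnorm_powr[OF fi q] e q qnorm_nonneg[of q f] by (auto intro!: powr_mono2)
      show "qintegral q g \<le> ennreal ((qnorm q g + e) powr q)"
        using qintegral_eq_qnorm_powr[OF gi q] e q qnorm_nonneg[of q g] by (auto intro!: powr_mono2)
    qed (use e qnorm_nonneg[of q f] qnorm_nonneg[of q g] in auto)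
    then show ?thesis by (simp add: algebra_simps)
  qed
  from main[of 1] show "qintegral q (\<lambda>x. f x + g x) < \<infinity>"
    using le_less_trans by fastforce
  show "qnorm q (\<lambda>x. f x + g x) \<le> qnorm q f + qnorm q g"
  proof (rule field_le_epsilon)
    fix e :: real assume e: "e > 0"
    show "qnorm q (\<lambda>x. f x + g x) \<le> qnorm q f + qnorm q g + e"
      using qnorm_le_if_qintegral_le[OF main[of "e/2"]] e q qnorm_nonneg[of q f] qnorm_nonneg[of q g]
      by simp
  qed
qed

lemma qintegral_cmult:
  assumes "f \<in> borel_measurable lebesgue"
  shows "qintegral q (\<lambda>x. c * f x) = ennreal (\<bar>c\<bar> powr q) * qintegral q f"
proof -
  have "qintegral q (\<lambda>x. c * f x)
      = (\<integral>\<^sup>+x. ennreal (\<bar>c\<bar> powr q) * ennreal (\<bar>f x\<bar> powr q) \<partial>lebesgue)"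
    unfolding qintegral_def by (intro nn_integral_cong) (simp add: abs_mult powr_mult ennreal_mult)
  also have "\<dots> = ennreal (\<bar>c\<bar> powr q) * qintegral q f"
    using assms by (simp add: nn_integral_cmult qintegral_def)
  finally show ?thesis .
qed

lemma qnorm_cmult:
  assumes "f \<in> borel_measurable lebesgue" "q \<ge> 1"
  shows "qnorm q (\<lambda>x. c * f x) = \<bar>c\<bar> * qnorm q f"
proof -
  have "enn2real (qintegral q (\<lambda>x. c * f x)) = \<bar>c\<bar> powr q * enn2real (qintegral q f)"
    using qintegral_cmult[OF assms(1)] by (simp add: enn2real_mult)
  then show ?thesis using assms(2)
    by (simp add: qnorm_def powr_mult powr_powr)
qed

lemma qintegral_dilation:
  assumes "f \<in> borel_measurable lebesgue" "c \<noteq> 0"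
  shows "qintegral q (\<lambda>x. f (c * x)) = ennreal (1/\<bar>c\<bar>) * qintegral q f"
  unfolding qintegral_def using assms by (intro nn_integral_lebesgue_dilation) auto

lemma qnorm_dilation:
  assumes "f \<in> borel_measurable lebesgue" "c \<noteq> 0" "q \<ge> 1"
  shows "qnorm q (\<lambda>x. f (c * x)) = (1/\<bar>c\<bar>) powr (1/q) * qnorm q f"
proof -
  have "enn2real (qintegral q (\<lambda>x. f (c * x))) = (1/\<bar>c\<bar>) * enn2real (qintegral q f)"
    using qintegral_dilation[OF assms(1,2)] by (simp add: enn2real_mult)
  then show ?thesis using assms(2,3)
    by (simp add: qnorm_def powr_divide)
qed

lemma qintegral_AE_cong:
  assumes "AE x in lebesgue. f x = g x"
  shows "qintegral q f = qintegral q g"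
  unfolding qintegral_def using assms by (intro nn_integral_cong_AE) auto

lemma qnorm_AE_cong:
  assumes "AE x in lebesgue. f x = g x"
  shows "qnorm q f = qnorm q g"
  using qintegral_AE_cong[OF assms] by (simp add: qnorm_def)

lemma AE_eq_0_if_qnorm_eq_0:
  assumes f: "f \<in> borel_measurable lebesgue" and fi: "qintegral q f < \<infinity>"
    and q: "q \<ge> 1" and z: "qnorm q f = 0"
  shows "AE x in lebesgue. f x = 0"
proof -
  have "enn2real (qintegral q f) = 0" using z q by (simp add: qnorm_def)
  then have "qintegral q f = 0" using fi by (auto simp: enn2real_eq_0_iff)
  then have "AE x in lebesgue. ennreal (\<bar>f x\<bar> powr q) = 0"
    unfolding qintegral_def using f by (subst nn_integral_0_iff_AE[symmetric]) auto
  then show ?thesis by eventually_elim simp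
qed

lemma qintegral_abs: "qintegral q (\<lambda>x. \<bar>f x\<bar>) = qintegral q f" by (simp add: qintegral_def)
lemma qnorm_abs: "qnorm q (\<lambda>x. \<bar>f x\<bar>) = qnorm q f" by (simp add: qnorm_def qintegral_abs)

lemma qnorm_sum_abs_le:
  fixes g :: "nat \<Rightarrow> real \<Rightarrow> real"
  assumes g: "\<And>n. g n \<in> borel_measurable lebesgue" and gi: "\<And>n. qintegral q (g n) < \<infinity>"
    and q: "q \<ge> 1"
  shows "qintegral q (\<lambda>x. \<Sum>n<M. \<bar>g n x\<bar>) < \<infinity>
    \<and> qnorm q (\<lambda>x. \<Sum>n<M. \<bar>g n x\<bar>) \<le> (\<Sum>n<M. qnorm q (g n))"
proof (induction M)
  case 0
  have "qintegral q (\<lambda>x. 0) = 0" using q by (simp add: qintegral_def)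
  then show ?case by (simp add: qnorm_def)
next
  case (Suc M)
  have m1: "(\<lambda>x. \<Sum>n<M. \<bar>g n x\<bar>) \<in> borel_measurable lebesgue" using g by measurable
  have m2: "(\<lambda>x. \<bar>g M x\<bar>) \<in> borel_measurable lebesgue" using g by measurable
  have i2: "qintegral q (\<lambda>x. \<bar>g M x\<bar>) < \<infinity>" using gi by (simp add: qintegral_abs)
  note mk = qnorm_triangle[OF m1 m2 q conjunct1[OF Suc.IH] i2]
  show ?case using mk Suc.IH by (simp add: qnorm_abs)
qed

lemma abs_lim_minus_partial_sum_powr_le:
  fixes a :: "nat \<Rightarrow> real"
  assumes sa: "summable (\<lambda>n. \<bar>a n\<bar>)" and q: "q \<ge> 1"
  shows "ennreal (\<bar>lim (\<lambda>N. \<Sum>n<N. a n) - (\<Sum>n<N0. a n)\<bar> powr q)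
          \<le> (\<Squnion>M. ennreal ((\<Sum>n<M. \<bar>a (n + N0)\<bar>) powr q))"
proof -
  have s: "summable a" using sa by (rule summable_rabs_cancel)
  have "lim (\<lambda>N. \<Sum>n<N. a n) = suminf a" using summable_LIMSEQ[OF s] by (rule limI)
  then have eq: "lim (\<lambda>N. \<Sum>n<N. a n) - (\<Sum>n<N0. a n) = (\<Sum>n. a (n + N0))"
    using suminf_minus_initial_segment[OF s, of N0] by simp
  have sa': "summable (\<lambda>n. \<bar>a (n + N0)\<bar>)"
    using sa summable_iff_shift[of "\<lambda>n. \<bar>a n\<bar>" N0] by simp
  define v where "v = (\<Sum>n. \<bar>a (n + N0)\<bar>)"
  have v: "\<bar>\<Sum>n. a (n + N0)\<bar> \<le> v" unfolding v_def by (rule summable_rabs[OF sa'])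
  have lim: "(\<lambda>M. ennreal ((\<Sum>n<M. \<bar>a (n + N0)\<bar>) powr q)) \<longlonglongrightarrow> ennreal (v powr q)"
    unfolding v_def using q
    by (intro tendsto_ennrealI tendsto_powr' summable_LIMSEQ[OF sa'] tendsto_const)
      (auto intro: sum_nonneg)
  have "ennreal (v powr q) \<le> (\<Squnion>M. ennreal ((\<Sum>n<M. \<bar>a (n + N0)\<bar>) powr q))"
    by (rule LIMSEQ_le_const2[OF lim]) (metis SUP_upper UNIV_I)
  moreover have "ennreal (\<bar>\<Sum>n. a (n + N0)\<bar> powr q) \<le> ennreal (v powr q)"
    using v q by (intro ennreal_leI powr_mono2) auto
  ultimately show ?thesis unfolding eq by (rule order_trans[rotated])
qed

lemma nn_integral_SUP_partial_sums_powr_le: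
  fixes h :: "nat \<Rightarrow> real \<Rightarrow> real"
  assumes hm: "\<And>n. h n \<in> borel_measurable lebesgue" and hi: "\<And>n. qintegral q (h n) < \<infinity>"
    and q: "q \<ge> 1" and sm: "summable (\<lambda>n. qnorm q (h n))"
  shows "(\<integral>\<^sup>+x. (\<Squnion>M. ennreal ((\<Sum>n<M. \<bar>h n x\<bar>) powr q)) \<partial>lebesgue)
           \<le> ennreal ((\<Sum>n. qnorm q (h n)) powr q)"
proof -
  have inc: "incseq (\<lambda>M x. ennreal ((\<Sum>n<M. \<bar>h n x\<bar>) powr q))"
    unfolding incseq_def le_fun_def using q
    by (auto intro!: ennreal_leI powr_mono2 sum_nonneg sum_mono2)
  have meas: "\<And>M. (\<lambda>x. ennreal ((\<Sum>n<M. \<bar>h n x\<bar>) powr q)) \<in> borel_measurable lebesgue"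
    using hm by measurable
  show ?thesis
  proof (subst nn_integral_monotone_convergence_SUP[OF inc meas], rule SUP_least)
    fix M
    let ?G = "\<lambda>x. \<Sum>n<M. \<bar>h n x\<bar>"
    have mk: "qintegral q ?G < \<infinity> \<and> qnorm q ?G \<le> (\<Sum>n<M. qnorm q (h n))"
      by (rule qnorm_sum_abs_le[OF hm hi q])
    have "(\<integral>\<^sup>+x. ennreal (?G x powr q) \<partial>lebesgue) = qintegral q ?G"
      unfolding qintegral_def by (intro nn_integral_cong) (simp add: sum_nonneg)
    also have "\<dots> = ennreal (qnorm q ?G powr q)"
      using qintegral_eq_qnorm_powr mk q by blast
    also have "\<dots> \<le> ennreal ((\<Sum>n. qnorm q (h n)) powr q)"
    proof (intro ennreal_leI powr_mono2)
      show "qnorm q ?G \<le> (\<Sum>n. qnorm q (h n))"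
        using mk sum_le_suminf[OF sm, of "{..<M}"] qnorm_nonneg by (auto intro: order_trans)
    qed (use q qnorm_nonneg in auto)
    finally show "(\<integral>\<^sup>+x. ennreal (?G x powr q) \<partial>lebesgue) \<le> ennreal ((\<Sum>n. qnorm q (h n)) powr q)" .
  qed
qed

lemma AE_summable_abs_if_summable_qnorm:
  fixes h :: "nat \<Rightarrow> real \<Rightarrow> real"
  assumes hm: "\<And>n. h n \<in> borel_measurable lebesgue" and hi: "\<And>n. qintegral q (h n) < \<infinity>"
    and q: "q \<ge> 1" and sm: "summable (\<lambda>n. qnorm q (h n))"
  shows "AE x in lebesgue. summable (\<lambda>n. \<bar>h n x\<bar>)"
proof -
  have "(\<lambda>x. \<Squnion>M. ennreal ((\<Sum>n<M. \<bar>h n x\<bar>) powr q)) \<in> borel_measurable lebesgue"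
    using hm by measurable
  then have "AE x in lebesgue. (\<Squnion>M. ennreal ((\<Sum>n<M. \<bar>h n x\<bar>) powr q)) \<noteq> \<infinity>"
    using nn_integral_SUP_partial_sums_powr_le[OF assms]
    by (intro nn_integral_PInf_AE) (auto simp: top_unique)
  then show ?thesis
  proof eventually_elim
    case (elim x)
    let ?U = "\<Squnion>M. ennreal ((\<Sum>n<M. \<bar>h n x\<bar>) powr q)"
    show ?case
    proof (rule summableI_nonneg_bounded)
      fix M
      have "ennreal ((\<Sum>n<M. \<bar>h n x\<bar>) powr q) \<le> ?U" by (rule SUP_upper2[of M]) auto
      then have "enn2real (ennreal ((\<Sum>n<M. \<bar>h n x\<bar>) powr q)) \<le> enn2real ?U"
        using elim by (intro enn2real_mono) (simp_all add: less_top[symmetric])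
      then have "(\<Sum>n<M. \<bar>h n x\<bar>) powr q \<le> enn2real ?U" by simp
      then have "((\<Sum>n<M. \<bar>h n x\<bar>) powr q) powr (1/q) \<le> (enn2real ?U) powr (1/q)"
        using q by (intro powr_mono2) auto
      then show "(\<Sum>n<M. \<bar>h n x\<bar>) \<le> (enn2real ?U) powr (1/q)"
        using q by (simp add: powr_powr sum_nonneg)
    qed auto
  qed
qed

lemma qnorm_series_converges:
  fixes h :: "nat \<Rightarrow> real \<Rightarrow> real"
  assumes hm: "\<And>n. h n \<in> borel_measurable lebesgue" and hi: "\<And>n. qintegral q (h n) < \<infinity>"
    and q: "q \<ge> 1" and sm: "summable (\<lambda>n. qnorm q (h n))"
  shows "\<exists>S. S \<in> borel_measurable lebesgue \<and> (\<forall>N. qintegral q (\<lambda>x. S x - (\<Sum>n<N. h n x)) < \<infinity>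
            \<and> qnorm q (\<lambda>x. S x - (\<Sum>n<N. h n x)) \<le> (\<Sum>n. qnorm q (h (n + N))))"
proof -
  define S where "S x = lim (\<lambda>N. \<Sum>n<N. h n x)" for x
  have Sm: "S \<in> borel_measurable lebesgue" unfolding S_def using hm by measurable
  have summable_abs: "AE x in lebesgue. summable (\<lambda>n. \<bar>h n x\<bar>)"
    by (rule AE_summable_abs_if_summable_qnorm[OF assms])
  have "qintegral q (\<lambda>x. S x - (\<Sum>n<N. h n x)) < \<infinity>
      \<and> qnorm q (\<lambda>x. S x - (\<Sum>n<N. h n x)) \<le> (\<Sum>n. qnorm q (h (n + N)))" for N
  proof -
    have smN: "summable (\<lambda>n. qnorm q (h (n + N)))"
      using sm summable_iff_shift[of "\<lambda>n. qnorm q (h n)" N] by simp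
    have "qintegral q (\<lambda>x. S x - (\<Sum>n<N. h n x))
        \<le> (\<integral>\<^sup>+x. (\<Squnion>M. ennreal ((\<Sum>n<M. \<bar>h (n + N) x\<bar>) powr q)) \<partial>lebesgue)"
      unfolding qintegral_def S_def using summable_abs
      by (intro nn_integral_mono_AE)
        (auto elim!: eventually_mono intro: abs_lim_minus_partial_sum_powr_le[OF _ q])
    also have "\<dots> \<le> ennreal ((\<Sum>n. qnorm q (h (n + N))) powr q)"
      using hm hi q smN by (rule nn_integral_SUP_partial_sums_powr_le)
    finally have le: "qintegral q (\<lambda>x. S x - (\<Sum>n<N. h n x))
        \<le> ennreal ((\<Sum>n. qnorm q (h (n + N))) powr q)" .
    have "0 \<le> (\<Sum>n. qnorm q (h (n + N)))"
      using smN qnorm_nonneg by (auto intro: suminf_nonneg)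
    then show ?thesis
      using le qnorm_le_if_qintegral_le[OF le _ q] by (auto simp: le_less_trans)
  qed
  then show ?thesis using Sm by blast
qed

section \<open>The essential supremum norm\<close>

definition ess_norm :: "(real \<Rightarrow> real) \<Rightarrow> ereal" where
  "ess_norm f = esssup lebesgue (\<lambda>x. ereal \<bar>f x\<bar>)"

lemma ess_norm_nonneg: "ess_norm f \<ge> 0"
proof -
  have "AE x in lebesgue. ereal \<bar>f x\<bar> \<le> ess_norm f"
    unfolding ess_norm_def by (rule esssup_AE)
  moreover have "ae_filter (lebesgue :: real measure) \<noteq> bot"
    by (simp add: ae_filter_eq_bot_iff)
  ultimately obtain x where "ereal \<bar>f x\<bar> \<le> ess_norm f"
    using eventually_happens' by blast
  then show ?thesis by (rule order_trans[rotated]) simp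
qed

lemma ess_norm_finite: "ess_norm f < \<infinity> \<Longrightarrow> ess_norm f = ereal (real_of_ereal (ess_norm f))"
  using ess_norm_nonneg[of f] by (cases "ess_norm f") auto

lemma AE_abs_le_ess_norm:
  assumes "ess_norm f < \<infinity>"
  shows "AE x in lebesgue. \<bar>f x\<bar> \<le> real_of_ereal (ess_norm f)"
proof -
  have "AE x in lebesgue. ereal \<bar>f x\<bar> \<le> ess_norm f"
    unfolding ess_norm_def by (rule esssup_AE)
  then show ?thesis
    by (rule eventually_mono) (metis ess_norm_finite[OF assms] ereal_less_eq(3))
qed

lemma ess_norm_le:
  assumes "f \<in> borel_measurable lebesgue" "AE x in lebesgue. \<bar>f x\<bar> \<le> c"
  shows "ess_norm f \<le> ereal c"
  unfolding ess_norm_def using assms by (intro esssup_I) (auto elim!: eventually_mono)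

lemma ess_norm_le_bound:
  assumes "f \<in> borel_measurable lebesgue" "AE x in lebesgue. \<bar>f x\<bar> \<le> c"
  shows "ess_norm f < \<infinity>" "real_of_ereal (ess_norm f) \<le> c"
proof -
  have "ess_norm f \<le> ereal c" by (rule ess_norm_le[OF assms])
  then show "ess_norm f < \<infinity>" by (rule le_less_trans) simp
  then show "real_of_ereal (ess_norm f) \<le> c" using \<open>ess_norm f \<le> ereal c\<close> ess_norm_finite
    by (metis ereal_less_eq(3))
qed

lemma ess_norm_triangle:
  assumes "f \<in> borel_measurable lebesgue" "g \<in> borel_measurable lebesgue"
    and "ess_norm f < \<infinity>" "ess_norm g < \<infinity>"
  shows "ess_norm (\<lambda>x. f x + g x) < \<infinity>"
    and "real_of_ereal (ess_norm (\<lambda>x. f x + g x))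
      \<le> real_of_ereal (ess_norm f) + real_of_ereal (ess_norm g)"
proof -
  have "AE x in lebesgue. \<bar>f x + g x\<bar> \<le> real_of_ereal (ess_norm f) + real_of_ereal (ess_norm g)"
    using AE_abs_le_ess_norm[OF assms(3)] AE_abs_le_ess_norm[OF assms(4)] by eventually_elim auto
  moreover have "(\<lambda>x. f x + g x) \<in> borel_measurable lebesgue" using assms by measurable
  ultimately show "ess_norm (\<lambda>x. f x + g x) < \<infinity>"
    and "real_of_ereal (ess_norm (\<lambda>x. f x + g x))
      \<le> real_of_ereal (ess_norm f) + real_of_ereal (ess_norm g)"
    using ess_norm_le_bound by blast+
qed

lemma ess_norm_cmult_le:
  assumes "f \<in> borel_measurable lebesgue" "ess_norm f < \<infinity>"
  shows "ess_norm (\<lambda>x. c * f x) < \<infinity>"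
    and "real_of_ereal (ess_norm (\<lambda>x. c * f x)) \<le> \<bar>c\<bar> * real_of_ereal (ess_norm f)"
proof -
  have "AE x in lebesgue. \<bar>c * f x\<bar> \<le> \<bar>c\<bar> * real_of_ereal (ess_norm f)"
    using AE_abs_le_ess_norm[OF assms(2)] by eventually_elim (auto simp: abs_mult mult_left_mono)
  moreover have "(\<lambda>x. c * f x) \<in> borel_measurable lebesgue" using assms by measurable
  ultimately show "ess_norm (\<lambda>x. c * f x) < \<infinity>"
    and "real_of_ereal (ess_norm (\<lambda>x. c * f x)) \<le> \<bar>c\<bar> * real_of_ereal (ess_norm f)"
    using ess_norm_le_bound by blast+
qed

lemma ess_norm_cmult:
  assumes "f \<in> borel_measurable lebesgue" "ess_norm f < \<infinity>"
  shows "real_of_ereal (ess_norm (\<lambda>x. c * f x)) = \<bar>c\<bar> * real_of_ereal (ess_norm f)"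
proof (cases "c = 0")
  case True
  have "ess_norm (\<lambda>x. 0 * f x) \<le> ereal 0" by (rule ess_norm_le) auto
  then have "ess_norm (\<lambda>x. 0 * f x) = 0" using ess_norm_nonneg[of "\<lambda>x. 0 * f x"] zero_ereal_def
    by (metis order_antisym)
  then show ?thesis using True by simp
next
  case False
  have m: "(\<lambda>x. c * f x) \<in> borel_measurable lebesgue" using assms by measurable
  note a = ess_norm_cmult_le[OF assms, of c]
  have "real_of_ereal (ess_norm (\<lambda>x. (1/c) * (c * f x)))
      \<le> \<bar>1/c\<bar> * real_of_ereal (ess_norm (\<lambda>x. c * f x))"
    by (rule ess_norm_cmult_le(2)[OF m a(1)])
  then have "real_of_ereal (ess_norm f) \<le> \<bar>1/c\<bar> * real_of_ereal (ess_norm (\<lambda>x. c * f x))"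
    using False by simp
  then have "\<bar>c\<bar> * real_of_ereal (ess_norm f) \<le> real_of_ereal (ess_norm (\<lambda>x. c * f x))"
    using False by (simp add: field_simps)
  then show ?thesis using a by simp
qed

lemma ess_norm_dilation:
  assumes "f \<in> borel_measurable lebesgue" "ess_norm f < \<infinity>" "c \<noteq> 0"
  shows "ess_norm (\<lambda>x. f (c * x)) < \<infinity>"
    and "real_of_ereal (ess_norm (\<lambda>x. f (c * x))) = real_of_ereal (ess_norm f)"
proof -
  have m: "(\<lambda>x. f (c * x)) \<in> borel_measurable lebesgue"
    using assms(1) by (rule borel_measurable_lebesgue_dilation)
  have "AE x in lebesgue. \<bar>f (c * x)\<bar> \<le> real_of_ereal (ess_norm f)"
    using AE_lebesgue_dilation[OF assms(3) AE_abs_le_ess_norm[OF assms(2)]] .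
  note * = ess_norm_le_bound[OF m this]
  show "ess_norm (\<lambda>x. f (c * x)) < \<infinity>" by (rule *(1))
  have "AE x in lebesgue. \<bar>f (c * ((1/c) * x))\<bar> \<le> real_of_ereal (ess_norm (\<lambda>x. f (c * x)))"
    using AE_lebesgue_dilation[OF _ AE_abs_le_ess_norm[OF *(1)], of "1/c"] assms(3) by simp
  then have "AE x in lebesgue. \<bar>f x\<bar> \<le> real_of_ereal (ess_norm (\<lambda>x. f (c * x)))"
    using assms(3) by simp
  from ess_norm_le_bound(2)[OF assms(1) this] *(2)
  show "real_of_ereal (ess_norm (\<lambda>x. f (c * x))) = real_of_ereal (ess_norm f)" by simp
qed

lemma ess_norm_AE_cong:
  assumes "f \<in> borel_measurable lebesgue" "g \<in> borel_measurable lebesgue"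
    and "AE x in lebesgue. f x = g x"
  shows "ess_norm f = ess_norm g"
  unfolding ess_norm_def using assms by (intro esssup_AE_cong) (auto elim!: eventually_mono)

lemma AE_eq_0_if_ess_norm_eq_0:
  assumes "ess_norm f < \<infinity>" "real_of_ereal (ess_norm f) = 0"
  shows "AE x in lebesgue. f x = 0"
  using AE_abs_le_ess_norm[OF assms(1)] by (rule eventually_mono) (use assms(2) in simp)

lemma ess_norm_series_converges:
  fixes h :: "nat \<Rightarrow> real \<Rightarrow> real"
  assumes hm: "\<And>n. h n \<in> borel_measurable lebesgue" and hi: "\<And>n. ess_norm (h n) < \<infinity>"
    and sm: "summable (\<lambda>n. real_of_ereal (ess_norm (h n)))"
  shows "\<exists>S. S \<in> borel_measurable lebesgue \<and> (\<forall>N. ess_norm (\<lambda>x. S x - (\<Sum>n<N. h n x)) < \<infinity>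
            \<and> real_of_ereal (ess_norm (\<lambda>x. S x - (\<Sum>n<N. h n x)))
                \<le> (\<Sum>n. real_of_ereal (ess_norm (h (n + N)))))"
proof -
  have good: "AE x in lebesgue. \<forall>n. \<bar>h n x\<bar> \<le> real_of_ereal (ess_norm (h n))"
    using AE_abs_le_ess_norm[OF hi] by (simp add: AE_all_countable)
  define S where "S x = lim (\<lambda>N. \<Sum>n<N. h n x)" for x
  have Sm: "S \<in> borel_measurable lebesgue" unfolding S_def using hm by measurable
  have "ess_norm (\<lambda>x. S x - (\<Sum>n<N. h n x)) < \<infinity>
      \<and> real_of_ereal (ess_norm (\<lambda>x. S x - (\<Sum>n<N. h n x)))
          \<le> (\<Sum>n. real_of_ereal (ess_norm (h (n + N))))" for N
  proof -
    have smN: "summable (\<lambda>n. real_of_ereal (ess_norm (h (n + N))))"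
      using sm summable_iff_shift[of "\<lambda>n. real_of_ereal (ess_norm (h n))" N] by simp
    have "AE x in lebesgue. \<bar>S x - (\<Sum>n<N. h n x)\<bar> \<le> (\<Sum>n. real_of_ereal (ess_norm (h (n + N))))"
      using good
    proof eventually_elim
      case (elim x)
      have sa: "summable (\<lambda>n. \<bar>h n x\<bar>)"
        by (rule summable_comparison_test[OF _ sm]) (use elim in auto)
      have s: "summable (\<lambda>n. h n x)" using sa by (rule summable_rabs_cancel)
      have "S x = (\<Sum>n. h n x)" unfolding S_def using summable_LIMSEQ[OF s] by (rule limI)
      then have eq: "S x - (\<Sum>n<N. h n x) = (\<Sum>n. h (n + N) x)"
        using suminf_minus_initial_segment[OF s, of N] by simp
      have sa': "summable (\<lambda>n. \<bar>h (n + N) x\<bar>)"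
        using sa summable_iff_shift[of "\<lambda>n. \<bar>h n x\<bar>" N] by simp
      have "\<bar>\<Sum>n. h (n + N) x\<bar> \<le> (\<Sum>n. \<bar>h (n + N) x\<bar>)" by (rule summable_rabs[OF sa'])
      also have "\<dots> \<le> (\<Sum>n. real_of_ereal (ess_norm (h (n + N))))"
        by (rule suminf_le[OF _ sa' smN]) (use elim in auto)
      finally show ?case unfolding eq .
    qed
    moreover have "(\<lambda>x. S x - (\<Sum>n<N. h n x)) \<in> borel_measurable lebesgue" using Sm hm by measurable
    ultimately show ?thesis using ess_norm_le_bound by blast
  qed
  then show ?thesis using Sm by blast
qed

section \<open>Lp norms for exponents in [1, infinity]\<close>

lemma memLp_finite_iff:
  "p \<noteq> \<infinity> \<Longrightarrow> memLp p f \<longleftrightarrow> f \<in> borel_measurable lebesgue \<and> qintegral (enn2real p) f < \<infinity>"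
  by (simp add: memLp_def qintegral_def)

lemma Lp_norm_finite: "p \<noteq> \<infinity> \<Longrightarrow> Lp_norm p f = qnorm (enn2real p) f"
  by (simp add: Lp_norm_def qnorm_def qintegral_def)

lemma memLp_top_iff: "memLp \<top> f \<longleftrightarrow> f \<in> borel_measurable lebesgue \<and> ess_norm f < \<infinity>"
  by (simp add: memLp_def ess_norm_def)

lemma Lp_norm_top: "Lp_norm \<top> f = real_of_ereal (ess_norm f)"
  by (simp add: Lp_norm_def ess_norm_def)

lemma enn2real_ge_1: "1 \<le> p \<Longrightarrow> p \<noteq> \<infinity> \<Longrightarrow> 1 \<le> enn2real p"
  using enn2real_mono[of 1 p] by (simp add: less_top)

lemma bpow_pos: "c \<noteq> 0 \<Longrightarrow> bpow p c > 0"
  by (simp add: bpow_def)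

lemma Lp_norm_nonneg: "Lp_norm p f \<ge> 0"
  by (cases "p = \<infinity>")
    (auto simp: Lp_norm_finite Lp_norm_top qnorm_nonneg ess_norm_nonneg real_of_ereal_pos)

lemma Lp_add:
  assumes p: "1 \<le> p" and f: "memLp p f" and g: "memLp p g"
  shows "memLp p (\<lambda>x. f x + g x) \<and> Lp_norm p (\<lambda>x. f x + g x) \<le> Lp_norm p f + Lp_norm p g"
proof (cases "p = \<infinity>")
  case True
  then show ?thesis using f g ess_norm_triangle[of f g] by (auto simp: memLp_top_iff Lp_norm_top)
next
  case False
  note q = enn2real_ge_1[OF p False]
  have m: "(\<lambda>x. f x + g x) \<in> borel_measurable lebesgue" using f g by (auto simp: memLp_def)
  show ?thesis using f g qnorm_triangle[OF _ _ q, of f g] m False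
    by (auto simp: memLp_finite_iff Lp_norm_finite)
qed

lemma Lp_cmult:
  assumes p: "1 \<le> p" and f: "memLp p f"
  shows "memLp p (\<lambda>x. c * f x) \<and> Lp_norm p (\<lambda>x. c * f x) = \<bar>c\<bar> * Lp_norm p f"
proof (cases "p = \<infinity>")
  case True
  then show ?thesis using f ess_norm_cmult_le[of f c] ess_norm_cmult[of f c]
    by (auto simp: memLp_top_iff Lp_norm_top)
next
  case False
  note q = enn2real_ge_1[OF p False]
  have m: "f \<in> borel_measurable lebesgue" using f by (simp add: memLp_def)
  have "qintegral (enn2real p) (\<lambda>x. c * f x) < \<infinity>"
    using f False by (simp add: qintegral_cmult[OF m] memLp_finite_iff ennreal_mult_less_top)
  then show ?thesis using f False m qnorm_cmult[OF m q]
    by (auto simp: memLp_finite_iff Lp_norm_finite)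
qed

lemma Lp_dilation:
  assumes p: "1 \<le> p" and f: "memLp p f" and c: "c \<noteq> 0"
  shows "memLp p (\<lambda>x. f (c * x)) \<and> Lp_norm p (\<lambda>x. f (c * x)) = Lp_norm p f / bpow p c"
proof (cases "p = \<infinity>")
  case True
  then show ?thesis using f ess_norm_dilation[of f c] c borel_measurable_lebesgue_dilation[of f c]
    by (auto simp: memLp_top_iff Lp_norm_top bpow_def)
next
  case False
  note q = enn2real_ge_1[OF p False]
  have m: "f \<in> borel_measurable lebesgue" using f by (simp add: memLp_def)
  have "qintegral (enn2real p) (\<lambda>x. f (c * x)) < \<infinity>"
    using f False c by (simp add: qintegral_dilation[OF m c] memLp_finite_iff ennreal_mult_less_top)
  moreover have "(1 / \<bar>c\<bar>) powr (1 / enn2real p) * qnorm (enn2real p) f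
      = qnorm (enn2real p) f / \<bar>c\<bar> powr (1 / enn2real p)"
    using c by (simp add: powr_divide)
  ultimately show ?thesis
    using f False m qnorm_dilation[OF m c q] borel_measurable_lebesgue_dilation[OF m, of c]
    by (auto simp: memLp_finite_iff Lp_norm_finite bpow_def)
qed

lemma Lp_AE_cong:
  assumes p: "1 \<le> p" and f: "memLp p f" and g: "g \<in> borel_measurable lebesgue"
    and ae: "AE x in lebesgue. f x = g x"
  shows "memLp p g \<and> Lp_norm p g = Lp_norm p f"
proof (cases "p = \<infinity>")
  case True
  have "ess_norm f = ess_norm g" using ess_norm_AE_cong[OF _ g ae] f True
    by (simp add: memLp_top_iff)
  then show ?thesis using f g True by (auto simp: memLp_top_iff Lp_norm_top)
next
  case False
  then show ?thesis using f g qintegral_AE_cong[OF ae] qnorm_AE_cong[OF ae]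
    by (auto simp: memLp_finite_iff Lp_norm_finite)
qed

lemma AE_eq_0_if_Lp_norm_eq_0:
  assumes p: "1 \<le> p" and f: "memLp p f" and z: "Lp_norm p f = 0"
  shows "AE x in lebesgue. f x = 0"
proof (cases "p = \<infinity>")
  case True
  then show ?thesis using f z AE_eq_0_if_ess_norm_eq_0[of f]
    by (auto simp: memLp_top_iff Lp_norm_top)
next
  case False
  then show ?thesis using f z AE_eq_0_if_qnorm_eq_0[of f "enn2real p"] enn2real_ge_1[OF p False]
    by (auto simp: memLp_finite_iff Lp_norm_finite)
qed

lemma Lp_series_converges:
  fixes h :: "nat \<Rightarrow> real \<Rightarrow> real"
  assumes p: "1 \<le> p" and h: "\<And>n. memLp p (h n)" and sm: "summable (\<lambda>n. Lp_norm p (h n))"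
  shows "\<exists>S. memLp p S \<and> (\<forall>N. memLp p (\<lambda>x. S x - (\<Sum>n<N. h n x))
            \<and> Lp_norm p (\<lambda>x. S x - (\<Sum>n<N. h n x)) \<le> (\<Sum>n. Lp_norm p (h (n + N))))"
proof -
  have hm: "\<And>n. h n \<in> borel_measurable lebesgue"
    using h by (simp add: memLp_def)
  have "\<exists>S. S \<in> borel_measurable lebesgue \<and> (\<forall>N. memLp p (\<lambda>x. S x - (\<Sum>n<N. h n x))
            \<and> Lp_norm p (\<lambda>x. S x - (\<Sum>n<N. h n x)) \<le> (\<Sum>n. Lp_norm p (h (n + N))))"
  proof (cases "p = \<infinity>")
    case True
    have "\<And>n. ess_norm (h n) < \<infinity>" "summable (\<lambda>n. real_of_ereal (ess_norm (h n)))"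
      using h sm True by (auto simp: memLp_top_iff Lp_norm_top)
    from ess_norm_series_converges[OF hm this] show ?thesis
      using True hm by (auto simp: memLp_top_iff Lp_norm_top)
  next
    case False
    have "\<And>n. qintegral (enn2real p) (h n) < \<infinity>" "summable (\<lambda>n. qnorm (enn2real p) (h n))"
      using h sm False by (auto simp: memLp_finite_iff Lp_norm_finite)
    from qnorm_series_converges[OF hm this(1) enn2real_ge_1[OF p False] this(2)] show ?thesis
      using False hm by (auto simp: memLp_finite_iff Lp_norm_finite)
  qed
  then obtain S where "S \<in> borel_measurable lebesgue" and S: "\<forall>N. memLp p (\<lambda>x. S x - (\<Sum>n<N. h n x))
            \<and> Lp_norm p (\<lambda>x. S x - (\<Sum>n<N. h n x)) \<le> (\<Sum>n. Lp_norm p (h (n + N)))" by blast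
  moreover have "memLp p S" using S[rule_format, of 0] by simp
  ultimately show ?thesis by blast
qed

lemma Lp_exists_norm_1:
  assumes p: "1 \<le> p"
  shows "\<exists>f. memLp p f \<and> Lp_norm p f = 1"
proof -
  define f :: "real \<Rightarrow> real" where "f = indicator {0..1}"
  have fm: "f \<in> borel_measurable lebesgue" unfolding f_def
    by (intro borel_measurable_indicator) auto
  show ?thesis
  proof (cases "p = \<infinity>")
    case True
    have ae: "AE x in lebesgue. \<bar>f x\<bar> \<le> 1" by (auto simp: f_def indicator_def)
    have fin: "ess_norm f < \<infinity>" and le: "real_of_ereal (ess_norm f) \<le> 1"
      using ess_norm_le_bound[OF fm ae] by auto
    have "real_of_ereal (ess_norm f) \<ge> 1"
    proof (rule ccontr)
      assume "\<not> real_of_ereal (ess_norm f) \<ge> 1"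
      then have lt: "real_of_ereal (ess_norm f) < 1" by simp
      from AE_abs_le_ess_norm[OF fin] obtain N
        where N: "{x \<in> space lebesgue. \<not> \<bar>f x\<bar> \<le> real_of_ereal (ess_norm f)} \<subseteq> N"
          "emeasure lebesgue N = 0" "N \<in> sets lebesgue"
        by (rule AE_E)
      have "{0..1} \<subseteq> N" using N(1) lt by (auto simp: f_def)
      then have "emeasure lebesgue {0..(1::real)} \<le> emeasure lebesgue N"
        using N(3) by (intro emeasure_mono) auto
      with N(2) show False by simp
    qed
    then show ?thesis using fin le fm True
      by (intro exI[of _ f]) (auto simp: memLp_top_iff Lp_norm_top)
  next
    case False
    note q = enn2real_ge_1[OF p False]
    have eq: "(\<lambda>x. ennreal (\<bar>f x\<bar> powr enn2real p)) = indicator {0..1}"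
      using q by (intro ext) (auto simp: f_def indicator_def)
    have "{0..1::real} \<in> sets lebesgue" by auto
    then have "qintegral (enn2real p) f = 1" unfolding qintegral_def eq
      by (simp add: nn_integral_indicator)
    then show ?thesis using fm False
      by (intro exI[of _ f]) (auto simp: memLp_finite_iff Lp_norm_finite qnorm_def)
  qed
qed

lemma Lp_zero: "1 \<le> p \<Longrightarrow> memLp p (\<lambda>x. 0) \<and> Lp_norm p (\<lambda>x. 0) = 0"
  using Lp_exists_norm_1[of p] Lp_cmult[of p _ 0] by auto

lemma Lp_diff:
  assumes p: "1 \<le> p" and f: "memLp p f" and g: "memLp p g"
  shows "memLp p (\<lambda>x. f x - g x) \<and> Lp_norm p (\<lambda>x. f x - g x) \<le> Lp_norm p f + Lp_norm p g"
proof -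
  have g': "memLp p (\<lambda>x. (-1) * g x) \<and> Lp_norm p (\<lambda>x. (-1) * g x) = Lp_norm p g"
    using Lp_cmult[OF p g, of "-1"] by simp
  from Lp_add[OF p f g'[THEN conjunct1]] g' show ?thesis by simp
qed

lemma Lp_uminus:
  assumes p: "1 \<le> p" and f: "memLp p f"
  shows "memLp p (\<lambda>x. - f x) \<and> Lp_norm p (\<lambda>x. - f x) = Lp_norm p f"
  using Lp_cmult[OF p f, of "-1"] by simp

section \<open>Dilation operators and their perturbations of the identity\<close>

lemma Top_Lp:
  assumes p: "1 \<le> p" and f: "memLp p f" and c: "c \<noteq> 0"
  shows "memLp p (Top c f) \<and> Lp_norm p (Top c f) = Lp_norm p f / bpow p c"
  unfolding Top_def using Lp_dilation[OF p f c] .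

lemma Top_funpow: "(Top c ^^ n) g = (\<lambda>x. g (c ^ n * x))"
  by (induction n) (auto simp: Top_def mult.assoc mult.commute)

lemma Top_funpow_Lp:
  assumes p: "1 \<le> p" and f: "memLp p f" and c: "c \<noteq> 0"
  shows "memLp p ((Top c ^^ n) f) \<and> Lp_norm p ((Top c ^^ n) f) = Lp_norm p f / bpow p c ^ n"
proof (induction n)
  case 0 then show ?case using f by simp
next
  case (Suc n)
  then show ?case using Top_Lp[OF p _ c, of "(Top c ^^ n) f"]
    by (simp add: divide_divide_eq_left mult.commute)
qed

lemma bpow_inverse: "c \<noteq> 0 \<Longrightarrow> bpow p (1 / c) = 1 / bpow p c"
  by (simp add: bpow_def powr_divide)

lemma Mop_diff: "Mop a b f x - Mop a b g x = Mop a b (\<lambda>x. f x - g x) x"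
  by (simp add: Mop_def Top_def algebra_simps)

lemma Top_diff: "Top b f x - Top b g x = Top b (\<lambda>x. f x - g x) x"
  by (simp add: Top_def)

lemma Mop_Lp:
  assumes p: "1 \<le> p" and f: "memLp p f" and b: "b \<noteq> 0"
  shows "memLp p (Mop a b f)"
    "Lp_norm p (Mop a b f) \<le> (1 + \<bar>a\<bar> / bpow p b) * Lp_norm p f"
    "\<bar>1 - \<bar>a\<bar> / bpow p b\<bar> * Lp_norm p f \<le> Lp_norm p (Mop a b f)"
proof -
  let ?B = "bpow p b"
  note t = Top_Lp[OF p f b]
  note at = Lp_cmult[OF p t[THEN conjunct1], of a]
  note neg_at = Lp_cmult[OF p t[THEN conjunct1], of "-a"]
  have eqM: "Mop a b f = (\<lambda>x. f x + (-a) * Top b f x)" by (simp add: Mop_def fun_eq_iff)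
  note s = Lp_add[OF p f neg_at[THEN conjunct1]]
  show m: "memLp p (Mop a b f)" using s eqM by simp
  have "Lp_norm p (Mop a b f) \<le> Lp_norm p f + \<bar>a\<bar> * (Lp_norm p f / ?B)"
    using s eqM neg_at t by simp
  then show "Lp_norm p (Mop a b f) \<le> (1 + \<bar>a\<bar> / ?B) * Lp_norm p f"
    by (simp add: algebra_simps)
  have e1: "(\<lambda>x. Mop a b f x + a * Top b f x) = f" by (simp add: Mop_def fun_eq_iff)
  have l1: "Lp_norm p f \<le> Lp_norm p (Mop a b f) + \<bar>a\<bar> * (Lp_norm p f / ?B)"
    using Lp_add[OF p m at[THEN conjunct1]] at t e1 by simp
  have e2: "(\<lambda>x. f x - Mop a b f x) = (\<lambda>x. a * Top b f x)" by (simp add: Mop_def fun_eq_iff)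
  have l2: "\<bar>a\<bar> * (Lp_norm p f / ?B) \<le> Lp_norm p f + Lp_norm p (Mop a b f)"
    using Lp_diff[OF p f m] at t e2 by simp
  have "\<bar>a\<bar> * (Lp_norm p f / ?B) = \<bar>a\<bar> / ?B * Lp_norm p f" by simp
  then show "\<bar>1 - \<bar>a\<bar> / ?B\<bar> * Lp_norm p f \<le> Lp_norm p (Mop a b f)"
    using l1 l2 Lp_norm_nonneg[of p f] by (auto simp: abs_if algebra_simps)
qed

lemma AE_eq_if_bounded_below:
  assumes p: "1 \<le> p"
    and mem: "\<And>f. memLp p f \<Longrightarrow> memLp p (H f)"
    and lin: "\<And>f g x. H f x - H g x = H (\<lambda>x. f x - g x) x"
    and low: "\<And>f. memLp p f \<Longrightarrow> c * Lp_norm p f \<le> Lp_norm p (H f)" and c: "c > 0"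
    and f: "memLp p f" and g: "memLp p g" and eq: "AE x in lebesgue. H f x = H g x"
  shows "AE x in lebesgue. f x = g x"
proof -
  note d = Lp_diff[OF p f g, THEN conjunct1]
  have "AE x in lebesgue. H (\<lambda>x. f x - g x) x = 0"
    using eq by eventually_elim (simp add: lin[symmetric])
  then have "Lp_norm p (H (\<lambda>x. f x - g x)) = 0"
    using Lp_AE_cong[OF p mem[OF d]] Lp_zero[OF p] by auto
  then have "c * Lp_norm p (\<lambda>x. f x - g x) \<le> 0"
    using low[OF d] by simp
  then have "Lp_norm p (\<lambda>x. f x - g x) = 0"
    using c Lp_norm_nonneg[of p "\<lambda>x. f x - g x"] by (simp add: mult_le_0_iff)
  then have "AE x in lebesgue. f x - g x = 0"
    using AE_eq_0_if_Lp_norm_eq_0[OF p d] by simp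
  then show ?thesis by eventually_elim simp
qed

lemma Lp_norm_tendsto_0_if_le:
  assumes "\<And>n. Lp_norm p (u n) \<le> K * Lp_norm p (v n)" and "(\<lambda>n. Lp_norm p (v n)) \<longlonglongrightarrow> 0"
  shows "(\<lambda>n. Lp_norm p (u n)) \<longlonglongrightarrow> 0"
proof (rule Lim_null_comparison)
  show "\<forall>\<^sub>F n in sequentially. norm (Lp_norm p (u n)) \<le> K * Lp_norm p (v n)"
    using assms(1) Lp_norm_nonneg by auto
  show "(\<lambda>n. K * Lp_norm p (v n)) \<longlonglongrightarrow> 0"
    using tendsto_mult_right_zero[OF assms(2)] by simp
qed

lemma Lp_homeomorphismI:
  assumes p: "1 \<le> p"
    and mem: "\<And>f. memLp p f \<Longrightarrow> memLp p (H f)"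
    and lin: "\<And>f g x. H f x - H g x = H (\<lambda>x. f x - g x) x"
    and up: "\<And>f. memLp p f \<Longrightarrow> Lp_norm p (H f) \<le> C * Lp_norm p f"
    and low: "\<And>f. memLp p f \<Longrightarrow> c * Lp_norm p f \<le> Lp_norm p (H f)" and c: "c > 0"
    and ae: "\<And>f g. memLp p f \<Longrightarrow> memLp p g \<Longrightarrow> (AE x in lebesgue. f x = g x)
               \<Longrightarrow> (AE x in lebesgue. H f x = H g x)"
    and surj: "\<And>g. memLp p g \<Longrightarrow> \<exists>f. memLp p f \<and> (AE x in lebesgue. H f x = g x)"
  shows "Lp_homeomorphism p H"
  unfolding Lp_homeomorphism_def
proof (intro conjI allI impI)
  show "memLp p (H f)" if "memLp p f" for f
    using mem that .
  show "AE x in lebesgue. H f x = H g x"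
    if "memLp p f" "memLp p g" "AE x in lebesgue. f x = g x" for f g
    using ae that .
  show "AE x in lebesgue. f x = g x"
    if "memLp p f" "memLp p g" "AE x in lebesgue. H f x = H g x" for f g
    using AE_eq_if_bounded_below[where H = H and c = c, OF p mem lin low c that] .
  show "\<exists>f. memLp p f \<and> (AE x in lebesgue. H f x = g x)" if "memLp p g" for g
    using surj that .
next
  fix fs :: "nat \<Rightarrow> real \<Rightarrow> real" and f
  assume fs: "\<forall>n. memLp p (fs n)" and f: "memLp p f"
  have d: "memLp p (\<lambda>x. fs n x - f x)" for n
    using Lp_diff[OF p _ f] fs by blast
  have "Lp_norm p (\<lambda>x. H (fs n) x - H f x) \<le> C * Lp_norm p (\<lambda>x. fs n x - f x)" for n
    using up[OF d] by (simp add: lin)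
  then show "(\<lambda>n. Lp_norm p (\<lambda>x. H (fs n) x - H f x)) \<longlonglongrightarrow> 0"
    if "(\<lambda>n. Lp_norm p (\<lambda>x. fs n x - f x)) \<longlonglongrightarrow> 0"
    using that by (rule Lp_norm_tendsto_0_if_le)
  have "Lp_norm p (\<lambda>x. fs n x - f x) \<le> (1/c) * Lp_norm p (\<lambda>x. H (fs n) x - H f x)" for n
  proof -
    have "c * Lp_norm p (\<lambda>x. fs n x - f x) \<le> Lp_norm p (\<lambda>x. H (fs n) x - H f x)"
      using low[OF d] by (simp add: lin)
    then show ?thesis
      using c by (simp add: pos_le_divide_eq mult.commute)
  qed
  then show "(\<lambda>n. Lp_norm p (\<lambda>x. fs n x - f x)) \<longlonglongrightarrow> 0"
    if "(\<lambda>n. Lp_norm p (\<lambda>x. H (fs n) x - H f x)) \<longlonglongrightarrow> 0"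
    using that by (rule Lp_norm_tendsto_0_if_le)
qed

lemma le_0_if_le_geometric:
  fixes x r D :: real
  assumes "\<And>N. x \<le> D * r ^ N" "0 \<le> r" "r < 1"
  shows "x \<le> 0"
proof -
  have "(\<lambda>N. D * r ^ N) \<longlonglongrightarrow> 0"
    using assms(2,3) by (intro tendsto_mult_right_zero LIMSEQ_power_zero) simp
  then show ?thesis
    using LIMSEQ_le_const assms(1) by blast
qed

lemma op_norm_bounds:
  assumes p: "1 \<le> p" and bd: "\<And>f. memLp p f \<Longrightarrow> Lp_norm p f = 1 \<Longrightarrow> Lp_norm p (H f) \<le> K"
  shows "0 \<le> op_norm p H \<and> op_norm p H \<le> K"
proof -
  let ?S = "{Lp_norm p (H f) | f. memLp p f \<and> Lp_norm p f = 1}"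
  obtain f0 where f0: "memLp p f0" "Lp_norm p f0 = 1" using Lp_exists_norm_1[OF p] by blast
  have ne: "?S \<noteq> {}" using f0 by blast
  have ub: "\<And>y. y \<in> ?S \<Longrightarrow> y \<le> K" using bd by blast
  have "Sup ?S \<le> K" by (rule cSup_least[OF ne]) (use ub in blast)
  moreover have "0 \<le> Sup ?S"
    by (rule cSup_upper2[of "Lp_norm p (H f0)"])
      (use f0 Lp_norm_nonneg ub in \<open>auto simp: bdd_above_def\<close>)
  ultimately show ?thesis by (simp add: op_norm_def)
qed

lemma Lp_geometric_series_sum:
  fixes h :: "(real \<Rightarrow> real) \<Rightarrow> nat \<Rightarrow> real \<Rightarrow> real"
  assumes p: "1 \<le> p" and r: "0 \<le> r" "r < 1"
    and hm: "\<And>g n. memLp p g \<Longrightarrow> memLp p (h g n)"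
    and hn: "\<And>g n. memLp p g \<Longrightarrow> Lp_norm p (h g n) = K * r ^ n * Lp_norm p g"
  shows "\<exists>R. \<forall>g. memLp p g \<longrightarrow> memLp p (R g) \<and> (\<forall>N. memLp p (\<lambda>x. R g x - (\<Sum>n<N. h g n x))
           \<and> Lp_norm p (\<lambda>x. R g x - (\<Sum>n<N. h g n x)) \<le> K / (1 - r) * r ^ N * Lp_norm p g)"
proof -
  have tail: "(\<Sum>n. Lp_norm p (h g (n + N))) = K / (1 - r) * r ^ N * Lp_norm p g"
    if g: "memLp p g" for g N
  proof -
    have "(\<Sum>n. Lp_norm p (h g (n + N))) = (\<Sum>n. (K * r ^ N * Lp_norm p g) * r ^ n)"
      using hn[OF g] by (simp add: power_add mult_ac)
    also have "\<dots> = (K * r ^ N * Lp_norm p g) * (1 / (1 - r))"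
      using r by (subst suminf_mult) (auto simp: suminf_geometric)
    finally show ?thesis by simp
  qed
  have "\<exists>S. memLp p g \<longrightarrow> memLp p S \<and> (\<forall>N. memLp p (\<lambda>x. S x - (\<Sum>n<N. h g n x))
           \<and> Lp_norm p (\<lambda>x. S x - (\<Sum>n<N. h g n x)) \<le> K / (1 - r) * r ^ N * Lp_norm p g)"
    for g
  proof (cases "memLp p g")
    case g: True
    have "summable (\<lambda>n. K * Lp_norm p g * r ^ n)"
      using r by (intro summable_mult summable_geometric) simp
    then have "summable (\<lambda>n. Lp_norm p (h g n))"
      using hn[OF g] by (simp add: mult_ac)
    from Lp_series_converges[OF p hm[OF g] this] show ?thesis
      unfolding tail[OF g] by blast
  qed simp
  then show ?thesis by (rule choice[OF allI])
qed

(* The remainder e g N of the telescoping identity decays like r^N, so M applied to the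
   L^p sum R g of the series differs from g by O(r^N) in norm for every N. *)
lemma Mop_right_inverse_series:
  fixes h e :: "(real \<Rightarrow> real) \<Rightarrow> nat \<Rightarrow> real \<Rightarrow> real"
  assumes p: "1 \<le> p" and b: "b \<noteq> 0" and r: "0 \<le> r" "r < 1"
    and hm: "\<And>g n. memLp p g \<Longrightarrow> memLp p (h g n)"
    and hn: "\<And>g n. memLp p g \<Longrightarrow> Lp_norm p (h g n) = K * r ^ n * Lp_norm p g"
    and telescope: "\<And>g N x. Mop a b (\<lambda>x. \<Sum>n<N. h g n x) x - g x = e g N x"
    and em: "\<And>g N. memLp p g \<Longrightarrow> memLp p (e g N) \<and> Lp_norm p (e g N) \<le> r ^ N * Lp_norm p g"
  shows "\<exists>R. (\<forall>g. memLp p g \<longrightarrow> memLp p (R g) \<and> (AE x in lebesgue. Mop a b (R g) x = g x))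
            \<and> (\<lambda>N. op_norm p (\<lambda>g x. (\<Sum>n<N. h g n x) - R g x)) \<longlonglongrightarrow> 0"
proof -
  define D where "D = K / (1 - r)"
  obtain R where R: "\<And>g N. memLp p g \<Longrightarrow> memLp p (R g) \<and> memLp p (\<lambda>x. R g x - (\<Sum>n<N. h g n x))
      \<and> Lp_norm p (\<lambda>x. R g x - (\<Sum>n<N. h g n x)) \<le> D * r ^ N * Lp_norm p g"
    using Lp_geometric_series_sum[OF p r hm hn] unfolding D_def by blast
  have "AE x in lebesgue. Mop a b (R g) x = g x" if g: "memLp p g" for g
  proof -
    define F where "F = (\<lambda>x. Mop a b (R g) x - g x)"
    have mF: "memLp p F" unfolding F_def using Lp_diff[OF p Mop_Lp(1)[OF p _ b] g] R[OF g] by blast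
    define C where "C = 1 + \<bar>a\<bar> / bpow p b"
    have "Lp_norm p F \<le> (C * D + 1) * Lp_norm p g * r ^ N" for N
    proof -
      let ?d = "\<lambda>x. R g x - (\<Sum>n<N. h g n x)"
      have md: "memLp p ?d" using R[OF g] by blast
      have Fe: "F = (\<lambda>x. Mop a b ?d x + e g N x)"
      proof
        fix x
        have "Mop a b (R g) x - Mop a b (\<lambda>x. \<Sum>n<N. h g n x) x = Mop a b ?d x"
          by (rule Mop_diff)
        then show "F x = Mop a b ?d x + e g N x"
          unfolding F_def using telescope[of g N x] by linarith
      qed
      have "Lp_norm p F \<le> Lp_norm p (Mop a b ?d) + Lp_norm p (e g N)"
        unfolding Fe using Lp_add[OF p Mop_Lp(1)[OF p md b] em[OF g, THEN conjunct1]] by blast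
      also have "\<dots> \<le> C * Lp_norm p ?d + r ^ N * Lp_norm p g"
        using Mop_Lp(2)[OF p md b, of a] em[OF g, of N] by (simp add: C_def)
      also have "\<dots> \<le> C * (D * r ^ N * Lp_norm p g) + r ^ N * Lp_norm p g"
        using R[OF g, of N] bpow_pos[OF b, of p] by (auto simp: C_def intro!: mult_left_mono)
      finally show ?thesis by (simp add: algebra_simps)
    qed
    then have "Lp_norm p F \<le> 0" using r by (intro le_0_if_le_geometric) auto
    then have "AE x in lebesgue. F x = 0"
      using AE_eq_0_if_Lp_norm_eq_0[OF p mF] Lp_norm_nonneg[of p F] by simp
    then show ?thesis by (auto simp: F_def elim!: eventually_mono)
  qed
  moreover have "(\<lambda>N. op_norm p (\<lambda>g x. (\<Sum>n<N. h g n x) - R g x)) \<longlonglongrightarrow> 0"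
  proof (rule Lim_null_comparison)
    have "0 \<le> op_norm p (\<lambda>g x. (\<Sum>n<N. h g n x) - R g x)
        \<and> op_norm p (\<lambda>g x. (\<Sum>n<N. h g n x) - R g x) \<le> D * r ^ N" for N
    proof (rule op_norm_bounds[OF p])
      fix f assume f: "memLp p f" "Lp_norm p f = 1"
      have "(\<lambda>x. (\<Sum>n<N. h f n x) - R f x) = (\<lambda>x. - (R f x - (\<Sum>n<N. h f n x)))" by auto
      then show "Lp_norm p (\<lambda>x. (\<Sum>n<N. h f n x) - R f x) \<le> D * r ^ N"
        using Lp_uminus[OF p, of "\<lambda>x. R f x - (\<Sum>n<N. h f n x)"] R[OF f(1), of N] f(2) by simp
    qed
    then show "\<forall>\<^sub>F N in sequentially. norm (op_norm p (\<lambda>g x. (\<Sum>n<N. h g n x) - R g x)) \<le> D * r ^ N"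
      by auto
    show "(\<lambda>N. D * r ^ N) \<longlonglongrightarrow> 0"
      using r by (intro tendsto_mult_right_zero LIMSEQ_power_zero) simp
  qed
  ultimately show ?thesis using R by blast
qed

lemma Mop_geometric_sum:
  "Mop a b (\<lambda>x. \<Sum>n<N. a ^ n * (Top b ^^ n) g x) x - g x = - (a ^ N * (Top b ^^ N) g x)"
proof -
  define F where "F n = a ^ n * g (b ^ n * x)" for n
  have shift: "a * (\<Sum>n<N. a ^ n * g (b ^ n * (b * x))) = (\<Sum>n<N. F (Suc n))"
    by (simp add: F_def sum_distrib_left mult_ac)
  have "Mop a b (\<lambda>x. \<Sum>n<N. a ^ n * (Top b ^^ n) g x) x = (\<Sum>n<N. F n) - (\<Sum>n<N. F (Suc n))"
    unfolding Mop_def Top_funpow Top_def shift[symmetric] by (simp add: F_def)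
  also have "\<dots> = F 0 - F N" by (simp add: sum_subtractf[symmetric] sum_lessThan_telescope')
  finally show ?thesis by (simp add: F_def Top_funpow)
qed

lemma Mop_reciprocal_geometric_sum:
  assumes a: "a \<noteq> 0" and b: "b \<noteq> 0"
  shows "Mop a b (\<lambda>x. \<Sum>n<N. - ((1/a) ^ Suc n * (Top (1/b) ^^ Suc n) g x)) x - g x
           = - ((1/a) ^ N * (Top (1/b) ^^ N) g x)"
proof -
  define F where "F n = (1/a) ^ n * g ((1/b) ^ n * x)" for n
  have shift: "a * (1/a) ^ Suc n * g ((1/b) ^ Suc n * (b * x)) = F n" for n
    using a b by (simp add: F_def mult_ac)
  have "Mop a b (\<lambda>x. \<Sum>n<N. - ((1/a) ^ Suc n * (Top (1/b) ^^ Suc n) g x)) x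
        = (\<Sum>n<N. F n) - (\<Sum>n<N. F (Suc n))"
    unfolding Mop_def Top_funpow Top_def
    by (simp add: F_def sum_negf sum_distrib_left shift[unfolded F_def, symmetric] mult.assoc
        del: power_Suc)
  also have "\<dots> = F 0 - F N" by (simp add: sum_subtractf[symmetric] sum_lessThan_telescope')
  finally show ?thesis by (simp add: F_def Top_funpow)
qed

lemma Top_inverse: "b \<noteq> 0 \<Longrightarrow> Top (1 / b) (Top b f) = f \<and> Top b (Top (1 / b) f) = f"
  by (simp add: Top_def)

lemma op_norm_Top:
  assumes p: "1 \<le> p" and b: "b \<noteq> 0"
  shows "op_norm p (Top b) = 1 / bpow p b"
proof -
  obtain f0 where f0: "memLp p f0" "Lp_norm p f0 = 1"
    using Lp_exists_norm_1[OF p] by blast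
  have "{Lp_norm p (Top b f) | f. memLp p f \<and> Lp_norm p f = 1} = {1 / bpow p b}"
  proof (intro set_eqI iffI)
    fix y assume "y \<in> {1 / bpow p b}"
    then show "y \<in> {Lp_norm p (Top b f) | f. memLp p f \<and> Lp_norm p f = 1}"
      using Top_Lp[OF p f0(1) b] f0 by (intro CollectI exI[of _ f0]) auto
  qed (use Top_Lp[OF p _ b] in auto)
  then show ?thesis by (simp add: op_norm_def)
qed

lemma Mop_inverse_series_small:
  assumes p: "1 \<le> p" and b: "b \<noteq> 0" and small: "\<bar>a\<bar> < bpow p b"
  shows "\<exists>R. (\<forall>g. memLp p g \<longrightarrow> memLp p (R g) \<and> (AE x in lebesgue. Mop a b (R g) x = g x))
            \<and> (\<lambda>N. op_norm p (\<lambda>g x. (\<Sum>n<N. a ^ n * (Top b ^^ n) g x) - R g x)) \<longlonglongrightarrow> 0"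
proof -
  define r where "r = \<bar>a\<bar> / bpow p b"
  have r: "0 \<le> r" "r < 1" using small bpow_pos[OF b, of p] by (auto simp: r_def)
  have summand: "memLp p (\<lambda>x. a ^ n * (Top b ^^ n) g x)
      \<and> Lp_norm p (\<lambda>x. a ^ n * (Top b ^^ n) g x) = r ^ n * Lp_norm p g"
    if g: "memLp p g" for g n
    using Lp_cmult[OF p Top_funpow_Lp[OF p g b, THEN conjunct1], of "a ^ n"] Top_funpow_Lp[OF p g b]
    by (simp add: r_def power_abs power_divide)
  show ?thesis
  proof (rule Mop_right_inverse_series[where e = "\<lambda>g N x. - (a ^ N * (Top b ^^ N) g x)" and K = 1,
        OF p b r])
    show "memLp p (\<lambda>x. - (a ^ N * (Top b ^^ N) g x))
        \<and> Lp_norm p (\<lambda>x. - (a ^ N * (Top b ^^ N) g x)) \<le> r ^ N * Lp_norm p g"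
      if "memLp p g" for g N
      using Lp_uminus[OF p summand[OF that, of N, THEN conjunct1]] summand[OF that, of N] by simp
  qed (use summand Mop_geometric_sum in auto)
qed

lemma Mop_inverse_series_large:
  assumes p: "1 \<le> p" and b: "b \<noteq> 0" and large: "\<bar>a\<bar> > bpow p b"
  shows "\<exists>R. (\<forall>g. memLp p g \<longrightarrow> memLp p (R g) \<and> (AE x in lebesgue. Mop a b (R g) x = g x))
            \<and> (\<lambda>N. op_norm p (\<lambda>g x. - (\<Sum>n\<in>{1..N}. (1 / a) ^ n * (Top (1 / b) ^^ n) g x) - R g x))
                 \<longlonglongrightarrow> 0"
proof -
  have a: "a \<noteq> 0" using large bpow_pos[OF b, of p] by auto
  define r where "r = bpow p b / \<bar>a\<bar>"
  have r: "0 \<le> r" "r < 1" using large bpow_pos[OF b, of p] by (auto simp: r_def)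
  have summand: "memLp p (\<lambda>x. (1/a) ^ n * (Top (1/b) ^^ n) g x)
      \<and> Lp_norm p (\<lambda>x. (1/a) ^ n * (Top (1/b) ^^ n) g x) = r ^ n * Lp_norm p g"
    if g: "memLp p g" for g n
    using Lp_cmult[OF p Top_funpow_Lp[OF p g, of "1/b" n, THEN conjunct1], of "(1/a) ^ n"]
      Top_funpow_Lp[OF p g, of "1/b" n] b
    by (simp add: r_def bpow_inverse power_abs power_divide)
  have "\<exists>R. (\<forall>g. memLp p g \<longrightarrow> memLp p (R g) \<and> (AE x in lebesgue. Mop a b (R g) x = g x))
      \<and> (\<lambda>N. op_norm p (\<lambda>g x. (\<Sum>n<N. - ((1/a) ^ Suc n * (Top (1/b) ^^ Suc n) g x)) - R g x))
          \<longlonglongrightarrow> 0"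
  proof (rule Mop_right_inverse_series[where e = "\<lambda>g N x. - ((1/a) ^ N * (Top (1/b) ^^ N) g x)"
        and K = r, OF p b r])
    show "memLp p (\<lambda>x. - ((1/a) ^ Suc n * (Top (1/b) ^^ Suc n) g x))"
      and "Lp_norm p (\<lambda>x. - ((1/a) ^ Suc n * (Top (1/b) ^^ Suc n) g x)) = r * r ^ n * Lp_norm p g"
      if "memLp p g" for g n
      using Lp_uminus[OF p summand[OF that, of "Suc n", THEN conjunct1]] summand[OF that, of "Suc n"]
      by (simp_all only: power_Suc mult.assoc)
    show "memLp p (\<lambda>x. - ((1/a) ^ N * (Top (1/b) ^^ N) g x))
        \<and> Lp_norm p (\<lambda>x. - ((1/a) ^ N * (Top (1/b) ^^ N) g x)) \<le> r ^ N * Lp_norm p g"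
      if "memLp p g" for g N
      using Lp_uminus[OF p summand[OF that, of N, THEN conjunct1]] summand[OF that, of N] by simp
  qed (use r Mop_reciprocal_geometric_sum[OF a b] in auto)
  moreover have "(\<Sum>n\<in>{1..N}. (1 / a) ^ n * (Top (1 / b) ^^ n) g x)
      = (\<Sum>n<N. (1/a) ^ Suc n * (Top (1/b) ^^ Suc n) g x)" for N g x
    using sum.atLeast1_atMost_eq[of "\<lambda>n. (1 / a) ^ n * (Top (1 / b) ^^ n) g x" N] by simp
  ultimately show ?thesis by (simp add: sum_negf)
qed

lemma Lp_homeomorphism_Top:
  assumes p: "1 \<le> p" and b: "b \<noteq> 0"
  shows "Lp_homeomorphism p (Top b)"
proof (rule Lp_homeomorphismI[OF p, where C = "1 / bpow p b" and c = "1 / bpow p b"])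
  show "memLp p (Top b f)" if "memLp p f" for f using Top_Lp[OF p that b] by blast
  show "Lp_norm p (Top b f) \<le> 1 / bpow p b * Lp_norm p f"
    and "1 / bpow p b * Lp_norm p f \<le> Lp_norm p (Top b f)" if "memLp p f" for f
    using Top_Lp[OF p that b] by simp_all
  show "AE x in lebesgue. Top b f x = Top b g x" if "AE x in lebesgue. f x = g x" for f g
    unfolding Top_def using AE_lebesgue_dilation[OF b that] .
  show "\<exists>f. memLp p f \<and> (AE x in lebesgue. Top b f x = g x)" if "memLp p g" for g
    using Top_Lp[OF p that, of "1/b"] Top_inverse[OF b] b by (intro exI[of _ "Top (1/b) g"]) auto
qed (use bpow_pos[OF b] Top_diff in auto)

lemma Lp_homeomorphism_Mop:
  assumes p: "1 \<le> p" and b: "b \<noteq> 0" and ab: "\<bar>a\<bar> \<noteq> bpow p b"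
  shows "Lp_homeomorphism p (Mop a b)"
proof (rule Lp_homeomorphismI[OF p, where C = "1 + \<bar>a\<bar> / bpow p b" and c = "\<bar>1 - \<bar>a\<bar> / bpow p b\<bar>"])
  show "0 < \<bar>1 - \<bar>a\<bar> / bpow p b\<bar>" using ab bpow_pos[OF b, of p] by (auto simp: field_simps)
  show "AE x in lebesgue. Mop a b f x = Mop a b g x" if "AE x in lebesgue. f x = g x" for f g
    using that AE_lebesgue_dilation[OF b that] by eventually_elim (simp add: Mop_def Top_def)
  show "\<exists>f. memLp p f \<and> (AE x in lebesgue. Mop a b f x = g x)" if "memLp p g" for g
    using Mop_inverse_series_small[OF p b] Mop_inverse_series_large[OF p b] ab that
    by (metis linorder_neqE_linordered_idom)
qed (use Mop_Lp[OF p _ b] Mop_diff in auto)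

theorem theorem3p2:
  fixes p :: ennreal and a b :: real
  assumes "1 \<le> p" and "b \<noteq> 0" and "\<bar>a\<bar> \<noteq> bpow p b"
  shows "Lp_homeomorphism p (Top b) \<and> Lp_homeomorphism p (Mop a b)
    \<and> (\<forall>f. Top (1 / b) (Top b f) = f \<and> Top b (Top (1 / b) f) = f)
    \<and> op_norm p (Top b) = 1 / bpow p b
    \<and> (\<forall>f. memLp p f \<longrightarrow>
          \<bar>1 - \<bar>a\<bar> / bpow p b\<bar> * Lp_norm p f \<le> Lp_norm p (Mop a b f) \<and>
          Lp_norm p (Mop a b f) \<le> (1 + \<bar>a\<bar> / bpow p b) * Lp_norm p f)
    \<and> (\<bar>a\<bar> < bpow p b \<longrightarrow>
         (\<exists>R. (\<forall>g. memLp p g \<longrightarrow> memLp p (R g) \<and> (AE x in lebesgue. Mop a b (R g) x = g x))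
            \<and> (\<lambda>N. op_norm p (\<lambda>g x. (\<Sum>n<N. a ^ n * (Top b ^^ n) g x) - R g x)) \<longlonglongrightarrow> 0))
    \<and> (\<bar>a\<bar> > bpow p b \<longrightarrow>
         (\<exists>R. (\<forall>g. memLp p g \<longrightarrow> memLp p (R g) \<and> (AE x in lebesgue. Mop a b (R g) x = g x))
            \<and> (\<lambda>N. op_norm p (\<lambda>g x. - (\<Sum>n\<in>{1..N}. (1 / a) ^ n * (Top (1 / b) ^^ n) g x) - R g x))
                 \<longlonglongrightarrow> 0))"
proof (intro conjI allI impI)
  note p = assms(1) and b = assms(2)
  show "Lp_homeomorphism p (Top b)" by (rule Lp_homeomorphism_Top[OF p b])
  show "Lp_homeomorphism p (Mop a b)" by (rule Lp_homeomorphism_Mop[OF assms])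
  show "Top (1 / b) (Top b f) = f" "Top b (Top (1 / b) f) = f" for f
    using Top_inverse[OF b] by simp_all
  show "op_norm p (Top b) = 1 / bpow p b" by (rule op_norm_Top[OF p b])
  show "\<bar>1 - \<bar>a\<bar> / bpow p b\<bar> * Lp_norm p f \<le> Lp_norm p (Mop a b f)"
    and "Lp_norm p (Mop a b f) \<le> (1 + \<bar>a\<bar> / bpow p b) * Lp_norm p f" if "memLp p f" for f
    using Mop_Lp[OF p that b] by simp_all
qed (use Mop_inverse_series_small[OF assms(1,2)] Mop_inverse_series_large[OF assms(1,2)] in blast)+

end
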